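(* Let $\nu:[0,1] \to \mathbb{R}$ be continuous with $\nu(x) > 0$ for all $x\in[0,1]$. Let $f:[0,1] \to \mathbb{R}$ be differentiable with $f(0) = 0$. Then $$\int_{0}^{1}|f(x)|\,\nu(x)\, dx \leq \left(\max_{0 \leq x \leq 1}\frac{1}{\nu(x)}\int_{x}^{1}\nu(z)\,dz\right)\int_{0}^{1}|f'(x)|\,\nu(x)\, dx,$$ and the constant is sharp: for the given weight $\nu$, no smaller constant makes this inequality hold for all such $f$. *)

theory Defs
  imports "HOL-Analysis.Analysis"
begin

definition deriv_on_unit :: "(real \<Rightarrow> real) \<Rightarrow> (real \<Rightarrow> real) \<Rightarrow> bool" where
  "deriv_on_unit f f' \<longleftrightarrow> (\<forall>x\<in>{0..1}. (f has_real_derivative f' x) (at x within {0..1}))"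

definition wL1 :: "(real \<Rightarrow> real) \<Rightarrow> (real \<Rightarrow> real) \<Rightarrow> ennreal" where
  "wL1 \<nu> g = (\<integral>\<^sup>+ x\<in>{0..1}. ennreal (\<bar>g x\<bar> * \<nu> x) \<partial>lborel)"

definition hardy_const :: "(real \<Rightarrow> real) \<Rightarrow> real" where
  "hardy_const \<nu> = (SUP x\<in>{0..1}. (1 / \<nu> x) * integral {x..1} \<nu>)"

end

theory Submission
  imports Defs
begin

text \<open>
  Since \<open>f 0 = 0\<close>, \<open>|f x| \<le> \<integral>\<^sub>0\<^sup>x |f'|\<close>; exchanging the order of integration (Tonelli) gives
  \<open>\<integral>\<^sub>0\<^sup>1 |f| \<nu> \<le> \<integral>\<^sub>0\<^sup>1 |f' t| N t dt\<close> with \<open>N t = \<integral>\<^sub>t\<^sup>1 \<nu>\<close>, and \<open>N t \<le> H \<nu> t\<close> for \<open>H = max (N / \<nu>)\<close>.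
  For sharpness let \<open>x\<^sub>0\<close> maximise \<open>N / \<nu>\<close> and take for \<open>f'\<close> a narrow bump of mass \<open>I\<close> just
  to the right of \<open>x\<^sub>0\<close>: then \<open>\<integral> |f'| \<nu> \<approx> \<nu> x\<^sub>0 I\<close>, while \<open>f = I\<close> beyond the bump, so
  \<open>\<integral> |f| \<nu> \<ge> N b I \<approx> N x\<^sub>0 I = H \<nu> x\<^sub>0 I\<close>, \<open>b\<close> the right end of the bump.
\<close>

lemma borel_measurable_indicator_derivative:
  fixes f f' :: "real \<Rightarrow> real"
  assumes deriv: "\<And>x. x \<in> {a..b} \<Longrightarrow> (f has_real_derivative f' x) (at x within {a..b})"
  shows "(\<lambda>t. indicator {a..b} t * f' t) \<in> borel_measurable borel"
proof (cases "a \<le> b")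
  case False
  then show ?thesis by simp
next
  case True
  txt \<open>On \<open>[a,b)\<close>, \<open>f'\<close> is the pointwise limit of forward difference quotients of the
    continuous extension of \<open>f\<close> by constants; the endpoint \<open>b\<close> is patched separately.\<close>
  have "continuous_on {a..b} f"
    using deriv continuous_on_eq_continuous_within DERIV_continuous by blast
  then have cont_g: "continuous_on UNIV (\<lambda>x. f (max a (min b x)))"
    by (rule continuous_on_compose2) (use True in \<open>auto intro!: continuous_intros\<close>)
  define q where
    "q n x = indicator {a..<b} x * (real (Suc n) * (f (max a (min b (x + 1 / real (Suc n))))
                                                    - f (max a (min b x))))" for n x
  have q_meas: "q n \<in> borel_measurable borel" for n
    unfolding q_def using borel_measurable_continuous_onI[OF cont_g] by measurable
  have "(\<lambda>n. q n x) \<longlonglongrightarrow> indicator {a..<b} x * f' x" for x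
  proof (cases "x \<in> {a..<b}")
    case False
    then show ?thesis by (simp add: q_def)
  next
    case x: True
    have step: "(\<lambda>n. 1 / real (Suc n)) \<longlonglongrightarrow> 0"
      using LIMSEQ_inverse_real_of_nat by (simp add: inverse_eq_divide)
    have small: "\<forall>\<^sub>F n in sequentially. 1 / real (Suc n) < b - x"
      using order_tendstoD(2)[OF step, of "b - x"] x by simp
    have "filterlim (\<lambda>n. x + 1 / real (Suc n)) (at x within {a..b}) sequentially"
      unfolding filterlim_at
    proof
      show "((\<lambda>n. x + 1 / real (Suc n)) \<longlongrightarrow> x) sequentially"
        using tendsto_add[OF tendsto_const step] by simp
      show "\<forall>\<^sub>F n in sequentially. x + 1 / real (Suc n) \<in> {a..b} \<and> x + 1 / real (Suc n) \<noteq> x"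
        using small by eventually_elim (use x in \<open>auto simp: add_increasing2\<close>)
    qed
    moreover have "((\<lambda>y. (f y - f x) / (y - x)) \<longlongrightarrow> f' x) (at x within {a..b})"
      using deriv[of x] x has_field_derivative_iff by auto
    ultimately have "(\<lambda>n. (f (x + 1 / real (Suc n)) - f x) / (x + 1 / real (Suc n) - x))
                       \<longlonglongrightarrow> f' x"
      by (rule filterlim_compose[rotated])
    moreover have "\<forall>\<^sub>F n in sequentially.
        (f (x + 1 / real (Suc n)) - f x) / (x + 1 / real (Suc n) - x) = q n x"
      using small by eventually_elim (use x in \<open>simp add: q_def max_def min_def add_increasing2\<close>)
    ultimately show ?thesis
      using x by (simp add: Lim_transform_eventually)
  qed
  then have "(\<lambda>t. indicator {a..<b} t * f' t) \<in> borel_measurable borel"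
    by (rule borel_measurable_LIMSEQ_real[OF _ q_meas])
  moreover have "(\<lambda>t. indicator {a..b} t * f' t)
      = (\<lambda>t. if t = b then indicator {a..b} b * f' b else indicator {a..<b} t * f' t)"
    by (rule ext) (auto simp: indicator_def)
  ultimately show ?thesis by simp
qed

lemma abs_diff_le_nn_integral_abs_derivative:
  fixes f f' :: "real \<Rightarrow> real"
  assumes deriv: "\<And>x. x \<in> {a..b} \<Longrightarrow> (f has_real_derivative f' x) (at x within {a..b})"
    and x: "x \<in> {a..b}"
  shows "ennreal \<bar>f x - f a\<bar> \<le> (\<integral>\<^sup>+t. ennreal (indicator {a..x} t * \<bar>f' t\<bar>) \<partial>lborel)"
proof (cases "(\<integral>\<^sup>+t. ennreal (indicator {a..x} t * \<bar>f' t\<bar>) \<partial>lborel) = \<infinity>")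
  case True
  then show ?thesis by simp
next
  case False
  define F where "F t = indicator {a..x} t * \<bar>f' t\<bar>" for t
  have "F = (\<lambda>t. indicator {a..x} t * \<bar>indicator {a..b} t * f' t\<bar>)"
    using x by (auto simp: F_def indicator_def)
  then have F_meas: "F \<in> borel_measurable lborel"
    using borel_measurable_indicator_derivative[OF deriv] by simp
  obtain r where r: "(\<integral>\<^sup>+t. ennreal (F t) \<partial>lborel) = ennreal r"
    using False by (cases "\<integral>\<^sup>+t. ennreal (F t) \<partial>lborel") (simp_all add: F_def)
  have F_int: "integrable lborel F"
    by (rule integrableI_nn_integral_finite[OF F_meas _ r]) (simp add: F_def)
  define I where "I = integral\<^sup>L lborel F"
  have "(F has_integral I) UNIV"
    unfolding I_def by (rule has_integral_integral_lborel[OF F_int])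
  moreover have "F = (\<lambda>t. if t \<in> {a..x} then \<bar>f' t\<bar> else 0)"
    by (auto simp: F_def fun_eq_iff)
  ultimately have abs_int: "((\<lambda>t. \<bar>f' t\<bar>) has_integral I) {a..x}"
    by (simp only: has_integral_restrict_UNIV)
  have ftc: "(f' has_integral (f x - f a)) {a..x}"
  proof (rule fundamental_theorem_of_calculus)
    fix y assume "y \<in> {a..x}"
    then have "(f has_vector_derivative f' y) (at y within {a..b})"
      using x deriv has_real_derivative_iff_has_vector_derivative by auto
    then show "(f has_vector_derivative f' y) (at y within {a..x})"
      by (rule has_vector_derivative_within_subset) (use x in auto)
  qed (use x in auto)
  have "norm (integral {a..x} f') \<le> integral {a..x} (\<lambda>t. \<bar>f' t\<bar>)"
    using ftc abs_int by (intro integral_norm_bound_integral) auto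
  then have "\<bar>f x - f a\<bar> \<le> I"
    using ftc abs_int by (simp add: integral_unique)
  moreover have "(\<integral>\<^sup>+t. ennreal (F t) \<partial>lborel) = ennreal I"
    unfolding I_def by (rule nn_integral_eq_integral[OF F_int]) (simp add: F_def)
  ultimately show ?thesis
    by (simp add: F_def ennreal_leI)
qed

lemma nn_integral_lower_triangle_swap:
  fixes p q :: "real \<Rightarrow> ennreal"
  assumes p: "p \<in> borel_measurable borel" and q: "q \<in> borel_measurable borel"
  shows "(\<integral>\<^sup>+x. q x * (\<integral>\<^sup>+t. indicator {..x} t * p t \<partial>lborel) \<partial>lborel)
       = (\<integral>\<^sup>+t. p t * (\<integral>\<^sup>+x. indicator {t..} x * q x \<partial>lborel) \<partial>lborel)"
proof -
  let ?G = "\<lambda>x t. q x * (of_bool (t \<le> x) * p t)"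
  have G_meas: "(\<lambda>(x, t). ?G x t) \<in> borel_measurable (lborel \<Otimes>\<^sub>M lborel)"
    using p q by measurable
  have "(\<integral>\<^sup>+x. q x * (\<integral>\<^sup>+t. indicator {..x} t * p t \<partial>lborel) \<partial>lborel)
      = (\<integral>\<^sup>+x. (\<integral>\<^sup>+t. ?G x t \<partial>lborel) \<partial>lborel)"
    using p by (simp add: indicator_def flip: nn_integral_cmult)
  also have "\<dots> = (\<integral>\<^sup>+t. (\<integral>\<^sup>+x. ?G x t \<partial>lborel) \<partial>lborel)"
    using lborel_pair.Fubini'[OF G_meas] by simp
  also have "\<dots> = (\<integral>\<^sup>+t. p t * (\<integral>\<^sup>+x. indicator {t..} x * q x \<partial>lborel) \<partial>lborel)"
    using q by (simp add: indicator_def mult_ac flip: nn_integral_cmult)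
  finally show ?thesis .
qed

lemma integral_pos_if_continuous_nonneg:
  fixes h :: "real \<Rightarrow> real"
  assumes cont: "continuous_on {a..b} h" and nonneg: "\<And>t. t \<in> {a..b} \<Longrightarrow> 0 \<le> h t"
    and x: "x \<in> {a..b}" "0 < h x" and ab: "a < b"
  shows "0 < integral {a..b} h"
proof -
  have h_int: "(h has_integral integral {a..b} h) {a..b}"
    using integrable_continuous_interval[OF cont] by (rule integrable_integral)
  have "integral {a..b} h \<noteq> 0"
  proof
    assume "integral {a..b} h = 0"
    then have "h x = 0"
      using has_integral_0_cbox_imp_0[of a b h x] cont nonneg h_int x ab by auto
    with x show False by simp
  qed
  moreover have "0 \<le> integral {a..b} h"
    using h_int nonneg by (intro integral_nonneg) auto
  ultimately show ?thesis by simp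
qed

lemma exists_bump:
  fixes a b :: real
  assumes "a < b"
  obtains h :: "real \<Rightarrow> real" where "continuous_on UNIV h" "\<And>t. 0 \<le> h t" "\<And>t. h t \<noteq> 0 \<Longrightarrow> t \<in> {a<..<b}"
    "0 < integral {a..b} h"
proof -
  define h where "h t = max 0 ((b - a) / 2 - \<bar>t - (a + b) / 2\<bar>)" for t
  have cont: "continuous_on UNIV h"
    unfolding h_def by (intro continuous_intros)
  show ?thesis
  proof (rule that[of h])
    show "0 \<le> h t" for t
      by (simp add: h_def)
    show "t \<in> {a<..<b}" if "h t \<noteq> 0" for t
    proof -
      have "\<bar>t - (a + b) / 2\<bar> < (b - a) / 2"
        using that by (auto simp: h_def max_def split: if_splits)
      then show ?thesis
        unfolding abs_less_iff by (simp add: field_simps)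
    qed
    show "0 < integral {a..b} h"
      using assms by (intro integral_pos_if_continuous_nonneg[of _ _ _ "(a + b) / 2"]
          continuous_on_subset[OF cont]) (auto simp: h_def)
  qed (rule cont)
qed

lemma continuous_on_hardy_ratio:
  fixes \<nu> :: "real \<Rightarrow> real"
  assumes cont: "continuous_on {0..1} \<nu>" and pos: "\<And>x. x \<in> {0..1} \<Longrightarrow> \<nu> x > 0"
  shows "continuous_on {0..1} (\<lambda>x. (1 / \<nu> x) * integral {x..1} \<nu>)"
  using indefinite_integral_continuous_1'[OF integrable_continuous_interval[OF cont]] cont pos
  by (intro continuous_intros) force+

lemma hardy_const_ge:
  fixes \<nu> :: "real \<Rightarrow> real"
  assumes cont: "continuous_on {0..1} \<nu>" and pos: "\<And>x. x \<in> {0..1} \<Longrightarrow> \<nu> x > 0"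
    and x: "x \<in> {0..1}"
  shows "(1 / \<nu> x) * integral {x..1} \<nu> \<le> hardy_const \<nu>"
proof -
  have "compact ((\<lambda>x. (1 / \<nu> x) * integral {x..1} \<nu>) ` {0..1})"
    using compact_continuous_image[OF continuous_on_hardy_ratio[OF cont pos]] by simp
  then show ?thesis
    unfolding hardy_const_def using x
    by (intro cSUP_upper bounded_imp_bdd_above compact_imp_bounded)
qed

lemma hardy_const_attained:
  fixes \<nu> :: "real \<Rightarrow> real"
  assumes cont: "continuous_on {0..1} \<nu>" and pos: "\<And>x. x \<in> {0..1} \<Longrightarrow> \<nu> x > 0"
  obtains x0 where "x0 \<in> {0..1}" "hardy_const \<nu> = (1 / \<nu> x0) * integral {x0..1} \<nu>"
proof -
  obtain x0 where x0: "x0 \<in> {0..1}"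
    "\<And>y. y \<in> {0..1} \<Longrightarrow> (1 / \<nu> y) * integral {y..1} \<nu> \<le> (1 / \<nu> x0) * integral {x0..1} \<nu>"
    using continuous_attains_sup[OF compact_Icc _ continuous_on_hardy_ratio[OF cont pos]] by auto
  have "hardy_const \<nu> = (1 / \<nu> x0) * integral {x0..1} \<nu>"
    unfolding hardy_const_def by (rule cSup_eq_maximum) (use x0 in auto)
  with x0(1) show ?thesis by (rule that)
qed

lemma hardy_const_pos:
  fixes \<nu> :: "real \<Rightarrow> real"
  assumes cont: "continuous_on {0..1} \<nu>" and pos: "\<And>x. x \<in> {0..1} \<Longrightarrow> \<nu> x > 0"
  shows "0 < hardy_const \<nu>"
proof -
  have "0 < integral {0..1} \<nu>"
    using pos by (intro integral_pos_if_continuous_nonneg[OF cont, of 0]) (auto intro: less_imp_le)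
  then have "0 < (1 / \<nu> 0) * integral {0..1} \<nu>"
    using pos[of 0] by simp
  also have "\<dots> \<le> hardy_const \<nu>"
    using hardy_const_ge[OF cont pos, of 0] by simp
  finally show ?thesis .
qed

lemma nn_integral_tail_eq_integral:
  fixes \<nu> :: "real \<Rightarrow> real"
  assumes cont: "continuous_on {a..b} \<nu>" and nonneg: "\<And>x. x \<in> {a..b} \<Longrightarrow> 0 \<le> \<nu> x"
    and t: "t \<in> {a..b}"
  shows "(\<integral>\<^sup>+x. indicator {t..} x * ennreal (indicator {a..b} x * \<nu> x) \<partial>lborel)
       = ennreal (integral {t..b} \<nu>)"
proof -
  have "continuous_on {t..b} \<nu>"
    by (rule continuous_on_subset[OF cont]) (use t in auto)
  then have integral_tail: "(\<nu> has_integral integral {t..b} \<nu>) {t..b}"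
    by (simp add: integrable_continuous_interval integrable_integral)
  have "(\<integral>\<^sup>+x. indicator {t..} x * ennreal (indicator {a..b} x * \<nu> x) \<partial>lborel)
      = (\<integral>\<^sup>+x. ennreal (\<nu> x) * indicator {t..b} x \<partial>lborel)"
    by (rule nn_integral_cong) (use t in \<open>auto simp: indicator_def\<close>)
  also have "\<dots> = ennreal (integral {t..b} \<nu>)"
    by (rule nn_integral_has_integral_lebesgue'[OF _ integral_tail]) (use t nonneg in auto)
  finally show ?thesis .
qed

lemma wL1_le_iterated_integral_derivative:
  fixes \<nu> f f' :: "real \<Rightarrow> real"
  assumes nonneg: "\<And>x. x \<in> {0..1} \<Longrightarrow> 0 \<le> \<nu> x"
    and f0: "f 0 = 0" and deriv_f: "deriv_on_unit f f'"
  shows "wL1 \<nu> f \<le> (\<integral>\<^sup>+x. ennreal (indicator {0..1} x * \<nu> x) *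
           (\<integral>\<^sup>+t. indicator {..x} t * ennreal (indicator {0..1} t * \<bar>f' t\<bar>) \<partial>lborel) \<partial>lborel)"
  unfolding wL1_def
proof (rule nn_integral_mono)
  fix x :: real
  show "ennreal (\<bar>f x\<bar> * \<nu> x) * indicator {0..1} x
      \<le> ennreal (indicator {0..1} x * \<nu> x) *
         (\<integral>\<^sup>+t. indicator {..x} t * ennreal (indicator {0..1} t * \<bar>f' t\<bar>) \<partial>lborel)"
  proof (cases "x \<in> {0..1}")
    case x: True
    have "ennreal \<bar>f x\<bar> \<le> (\<integral>\<^sup>+t. ennreal (indicator {0..x} t * \<bar>f' t\<bar>) \<partial>lborel)"
      using abs_diff_le_nn_integral_abs_derivative[OF deriv_f[unfolded deriv_on_unit_def, rule_format] x]
        f0 by simp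
    also have "\<dots> = (\<integral>\<^sup>+t. indicator {..x} t * ennreal (indicator {0..1} t * \<bar>f' t\<bar>) \<partial>lborel)"
      by (rule nn_integral_cong) (use x in \<open>auto simp: indicator_def\<close>)
    finally show ?thesis
      using x nonneg[OF x] by (auto simp: ennreal_mult' mult.commute intro: mult_left_mono)
  qed simp
qed

lemma weighted_hardy_inequality:
  fixes \<nu> f f' :: "real \<Rightarrow> real"
  assumes cont: "continuous_on {0..1} \<nu>" and pos: "\<And>x. x \<in> {0..1} \<Longrightarrow> \<nu> x > 0"
    and f0: "f 0 = 0" and deriv_f: "deriv_on_unit f f'"
  shows "wL1 \<nu> f \<le> ennreal (hardy_const \<nu>) * wL1 \<nu> f'"
proof -
  define H where "H = hardy_const \<nu>"
  define p where "p t = ennreal (indicator {0..1} t * \<bar>f' t\<bar>)" for t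
  define q where "q x = ennreal (indicator {0..1} x * \<nu> x)" for x
  have deriv: "\<And>x. x \<in> {0..1} \<Longrightarrow> (f has_real_derivative f' x) (at x within {0..1})"
    using deriv_f unfolding deriv_on_unit_def by blast
  have "p = (\<lambda>t. ennreal \<bar>indicator {0..1} t * f' t\<bar>)"
    by (auto simp: p_def indicator_def fun_eq_iff)
  then have p_meas: "p \<in> borel_measurable borel"
    using borel_measurable_indicator_derivative[OF deriv] by simp
  have q_meas: "q \<in> borel_measurable borel"
    using borel_measurable_continuous_on_indicator[OF _ cont] by (simp add: q_def[abs_def])
  have tail: "(\<integral>\<^sup>+x. indicator {t..} x * q x \<partial>lborel) = ennreal (integral {t..1} \<nu>)"
    if "t \<in> {0..1}" for t
    unfolding q_def using that cont pos by (intro nn_integral_tail_eq_integral) (auto intro: less_imp_le)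
  have "wL1 \<nu> f \<le> (\<integral>\<^sup>+x. q x * (\<integral>\<^sup>+t. indicator {..x} t * p t \<partial>lborel) \<partial>lborel)"
    unfolding p_def q_def using pos f0 deriv_f
    by (intro wL1_le_iterated_integral_derivative) (auto intro: less_imp_le)
  also have "\<dots> = (\<integral>\<^sup>+t. p t * (\<integral>\<^sup>+x. indicator {t..} x * q x \<partial>lborel) \<partial>lborel)"
    by (rule nn_integral_lower_triangle_swap[OF p_meas q_meas])
  also have "\<dots> \<le> (\<integral>\<^sup>+t. ennreal H * (p t * q t) \<partial>lborel)"
  proof (rule nn_integral_mono)
    fix t :: real
    show "p t * (\<integral>\<^sup>+x. indicator {t..} x * q x \<partial>lborel) \<le> ennreal H * (p t * q t)"
    proof (cases "t \<in> {0..1}")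
      case t: True
      have "integral {t..1} \<nu> \<le> H * \<nu> t"
        using hardy_const_ge[OF cont pos t] pos[OF t] by (simp add: H_def field_simps)
      then have "ennreal (integral {t..1} \<nu>) \<le> ennreal H * q t"
        using t hardy_const_pos[OF cont pos] by (simp add: H_def q_def ennreal_leI flip: ennreal_mult')
      then have "p t * ennreal (integral {t..1} \<nu>) \<le> p t * (ennreal H * q t)"
        by (rule mult_left_mono) simp
      then show ?thesis
        using tail[OF t] by (simp add: mult.left_commute)
    qed (simp add: p_def)
  qed
  also have "\<dots> = ennreal H * (\<integral>\<^sup>+t. p t * q t \<partial>lborel)"
    by (rule nn_integral_cmult) (use p_meas q_meas in measurable)
  also have "(\<integral>\<^sup>+t. p t * q t \<partial>lborel) = wL1 \<nu> f'"
    unfolding wL1_def by (rule nn_integral_cong) (auto simp: p_def q_def indicator_def ennreal_mult')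
  finally show ?thesis
    by (simp add: H_def)
qed

lemma wL1_le_of_weight_bound_on_support:
  fixes \<nu> h :: "real \<Rightarrow> real"
  assumes nonneg: "\<And>t. 0 \<le> h t" and c: "0 \<le> c"
    and weight_bound: "\<And>t. t \<in> {0..1} \<Longrightarrow> h t \<noteq> 0 \<Longrightarrow> \<nu> t \<le> c"
    and h_int: "(h has_integral I) {0..1}"
  shows "wL1 \<nu> h \<le> ennreal (c * I)"
proof -
  have "wL1 \<nu> h \<le> (\<integral>\<^sup>+t. ennreal (c * h t) * indicator {0..1} t \<partial>lborel)"
    unfolding wL1_def
  proof (rule nn_integral_mono)
    fix t :: real
    have "t \<in> {0..1} \<Longrightarrow> h t * \<nu> t \<le> c * h t"
      using weight_bound[of t] nonneg[of t] by (cases "h t = 0") (auto simp: mult.commute)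
    then show "ennreal (\<bar>h t\<bar> * \<nu> t) * indicator {0..1} t \<le> ennreal (c * h t) * indicator {0..1} t"
      using nonneg[of t] by (auto simp: ennreal_leI indicator_def)
  qed
  also have "\<dots> = ennreal (c * I)"
    using c nonneg by (intro nn_integral_has_integral_lebesgue' has_integral_mult_right h_int) auto
  finally show ?thesis .
qed

lemma wL1_ge_of_constant_on_tail:
  fixes \<nu> f :: "real \<Rightarrow> real"
  assumes cont: "continuous_on {0..1} \<nu>" and nonneg: "\<And>x. x \<in> {0..1} \<Longrightarrow> 0 \<le> \<nu> x"
    and b: "b \<in> {0..1}" and f_const: "\<And>x. x \<in> {b..1} \<Longrightarrow> f x = c" and c: "0 \<le> c"
  shows "ennreal (integral {b..1} \<nu> * c) \<le> wL1 \<nu> f"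
proof -
  have "continuous_on {b..1} \<nu>"
    by (rule continuous_on_subset[OF cont]) (use b in auto)
  then have "((\<lambda>x. \<nu> x * c) has_integral integral {b..1} \<nu> * c) {b..1}"
    by (intro has_integral_mult_left integrable_integral integrable_continuous_interval)
  then have "ennreal (integral {b..1} \<nu> * c) = (\<integral>\<^sup>+x. ennreal (\<nu> x * c) * indicator {b..1} x \<partial>lborel)"
    using b nonneg c by (intro nn_integral_has_integral_lebesgue'[symmetric]) auto
  also have "\<dots> \<le> wL1 \<nu> f"
    unfolding wL1_def
    by (rule nn_integral_mono) (use b c f_const in \<open>auto simp: indicator_def mult.commute\<close>)
  finally show ?thesis .
qed

lemma exists_bump_primitive:
  fixes a b :: real
  assumes a: "0 \<le> a" and ab: "a < b" and b: "b \<le> 1"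
  obtains h :: "real \<Rightarrow> real" and I :: real
  where "\<And>t. 0 \<le> h t" "\<And>t. h t \<noteq> 0 \<Longrightarrow> t \<in> {a<..<b}" "(h has_integral I) {0..1}" "0 < I"
    "deriv_on_unit (\<lambda>x. integral {0..x} h) h" "\<And>x. x \<in> {b..1} \<Longrightarrow> integral {0..x} h = I"
proof -
  obtain h :: "real \<Rightarrow> real" where h: "continuous_on UNIV h" "\<And>t. 0 \<le> h t"
    "\<And>t. h t \<noteq> 0 \<Longrightarrow> t \<in> {a<..<b}" "0 < integral {a..b} h"
    using exists_bump[OF ab] by metis
  have h_cont: "continuous_on S h" for S
    using continuous_on_subset[OF h(1)] by simp
  have h_int: "h integrable_on {u..v}" for u v
    by (rule integrable_continuous_interval[OF h_cont])
  define I where "I = integral {0..1} h"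
  have "integral {a..b} h \<le> I"
    unfolding I_def using a b h(2) h_int by (intro integral_subset_le) auto
  with h(4) have I_pos: "0 < I" by simp
  have deriv: "deriv_on_unit (\<lambda>x. integral {0..x} h) h"
    unfolding deriv_on_unit_def using integral_has_real_derivative[OF h_cont] by blast
  have tail: "integral {0..x} h = I" if x: "x \<in> {b..1}" for x
  proof -
    have "h t = 0" if "t \<ge> b" for t
      using h(3)[of t] that by force
    then have "integral {b..y} h = integral {b..y} (\<lambda>_. 0)" for y
      by (intro integral_cong) auto
    then show ?thesis
      using Henstock_Kurzweil_Integration.integral_combine[where f = h and a = 0 and c = b and b = x]
        Henstock_Kurzweil_Integration.integral_combine[where f = h and a = 0 and c = b and b = 1]
        x a ab h_int
      by (simp add: I_def)
  qed
  show ?thesis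
    using that[OF h(2,3) _ I_pos deriv tail] h_int by (simp add: I_def integrable_integral)
qed

lemma concentrated_test_function:
  fixes \<nu> :: "real \<Rightarrow> real"
  assumes cont: "continuous_on {0..1} \<nu>" and pos: "\<And>x. x \<in> {0..1} \<Longrightarrow> \<nu> x > 0"
    and x0: "x0 \<in> {0..<1}" and \<eta>: "0 < \<eta>"
  obtains f h :: "real \<Rightarrow> real" and I :: real
  where "f 0 = 0" "deriv_on_unit f h" "0 < I"
    "wL1 \<nu> h \<le> ennreal ((\<nu> x0 + \<eta>) * I)"
    "ennreal ((integral {x0..1} \<nu> - \<eta>) * I) \<le> wL1 \<nu> f"
proof -
  obtain \<delta>1 where \<delta>1: "\<delta>1 > 0"
    "\<And>y. y \<in> {0..1} \<Longrightarrow> dist y x0 < \<delta>1 \<Longrightarrow> dist (\<nu> y) (\<nu> x0) < \<eta>"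
    using cont x0 \<eta> unfolding continuous_on_iff by fastforce
  obtain \<delta>2 where \<delta>2: "\<delta>2 > 0"
    "\<And>y. y \<in> {0..1} \<Longrightarrow> dist y x0 < \<delta>2 \<Longrightarrow>
       dist (integral {y..1} \<nu>) (integral {x0..1} \<nu>) < \<eta>"
    using indefinite_integral_continuous_1'[OF integrable_continuous_interval[OF cont]] x0 \<eta>
    unfolding continuous_on_iff by fastforce
  define b where "b = x0 + min (min \<delta>1 \<delta>2 / 2) (1 - x0)"
  have b: "x0 < b" "b \<le> 1" "b - x0 < \<delta>1" "b - x0 < \<delta>2"
    using x0 \<delta>1(1) \<delta>2(1) by (auto simp: b_def)
  obtain h :: "real \<Rightarrow> real" and I :: real where h: "\<And>t. 0 \<le> h t"
    "\<And>t. h t \<noteq> 0 \<Longrightarrow> t \<in> {x0<..<b}" "(h has_integral I) {0..1}" "0 < I"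
    "deriv_on_unit (\<lambda>x. integral {0..x} h) h" "\<And>x. x \<in> {b..1} \<Longrightarrow> integral {0..x} h = I"
    using exists_bump_primitive[of x0 b] x0 b by auto
  have "wL1 \<nu> h \<le> ennreal ((\<nu> x0 + \<eta>) * I)"
  proof (rule wL1_le_of_weight_bound_on_support[OF h(1) _ _ h(3)])
    show "0 \<le> \<nu> x0 + \<eta>"
      using pos[of x0] x0 \<eta> by simp
    show "\<nu> t \<le> \<nu> x0 + \<eta>" if "t \<in> {0..1}" "h t \<noteq> 0" for t
    proof -
      have "dist t x0 < \<delta>1"
        using h(2)[OF that(2)] b by (simp add: dist_real_def)
      then show ?thesis
        using \<delta>1(2)[OF that(1)] by (simp add: dist_real_def)
    qed
  qed
  moreover have "ennreal ((integral {x0..1} \<nu> - \<eta>) * I)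
      \<le> wL1 \<nu> (\<lambda>x. integral {0..x} h)"
  proof -
    have "dist (integral {b..1} \<nu>) (integral {x0..1} \<nu>) < \<eta>"
      using \<delta>2(2)[of b] b x0 by (simp add: dist_real_def)
    then have "ennreal ((integral {x0..1} \<nu> - \<eta>) * I) \<le> ennreal (integral {b..1} \<nu> * I)"
      using h(4) by (intro ennreal_leI) (simp add: dist_real_def)
    also have "\<dots> \<le> wL1 \<nu> (\<lambda>x. integral {0..x} h)"
      using pos b x0 h(4,6)
      by (intro wL1_ge_of_constant_on_tail[OF cont]) (auto intro: less_imp_le)
    finally show ?thesis .
  qed
  ultimately show ?thesis
    using that[of "\<lambda>x. integral {0..x} h"] h(4,5) by simp
qed

lemma hardy_const_sharp:
  fixes \<nu> :: "real \<Rightarrow> real"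
  assumes cont: "continuous_on {0..1} \<nu>" and pos: "\<And>x. x \<in> {0..1} \<Longrightarrow> \<nu> x > 0"
    and C: "C < hardy_const \<nu>"
  shows "\<exists>f f'. f 0 = 0 \<and> deriv_on_unit f f' \<and> \<not> wL1 \<nu> f \<le> ennreal C * wL1 \<nu> f'"
proof -
  txt \<open>A positive \<open>C' \<ge> C\<close> keeps the maximiser \<open>x0\<close> of \<open>N / \<nu>\<close> away from 1, where \<open>N\<close> vanishes.\<close>
  define C' where "C' = max C (hardy_const \<nu> / 2)"
  have C': "0 < C'" "C' < hardy_const \<nu>" "C \<le> C'"
    using C hardy_const_pos[OF cont pos] by (auto simp: C'_def)
  obtain x0 where x0: "x0 \<in> {0..1}" "hardy_const \<nu> = (1 / \<nu> x0) * integral {x0..1} \<nu>"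
    using hardy_const_attained[OF cont pos] by blast
  define \<nu>0 N0 where "\<nu>0 = \<nu> x0" and "N0 = integral {x0..1} \<nu>"
  have \<nu>0: "0 < \<nu>0"
    using pos[OF x0(1)] by (simp add: \<nu>0_def)
  have gap: "C' * \<nu>0 < N0"
    using C'(2) x0(2) \<nu>0 by (simp add: \<nu>0_def N0_def field_simps)
  have "x0 \<noteq> 1"
  proof
    assume "x0 = 1"
    then have "N0 = 0" by (simp add: N0_def)
    with gap mult_pos_pos[OF C'(1) \<nu>0] show False
      by linarith
  qed
  with x0(1) have x0': "x0 \<in> {0..<1}" by simp
  define \<eta> where "\<eta> = (N0 - C' * \<nu>0) / (2 * (C' + 1))"
  have \<eta>: "0 < \<eta>"
    using gap C'(1) by (simp add: \<eta>_def)
  have "\<eta> * (C' + 1) = (N0 - C' * \<nu>0) / 2"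
    using C'(1) by (simp add: \<eta>_def field_simps)
  then have key: "C' * (\<nu>0 + \<eta>) < N0 - \<eta>"
    using gap by (simp add: algebra_simps)
  obtain f h :: "real \<Rightarrow> real" and I :: real where test: "f 0 = 0" "deriv_on_unit f h" "0 < I"
    "wL1 \<nu> h \<le> ennreal ((\<nu>0 + \<eta>) * I)" "ennreal ((N0 - \<eta>) * I) \<le> wL1 \<nu> f"
    using concentrated_test_function[OF cont pos x0' \<eta>] unfolding \<nu>0_def N0_def by metis
  have "ennreal C * wL1 \<nu> h \<le> ennreal C' * ennreal ((\<nu>0 + \<eta>) * I)"
    using C'(3) test(4) by (intro mult_mono ennreal_leI) auto
  also have "\<dots> = ennreal (C' * (\<nu>0 + \<eta>) * I)"
    using C'(1) by (simp add: ennreal_mult' mult.assoc)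
  also have "\<dots> < ennreal ((N0 - \<eta>) * I)"
    using key test(3) mult_pos_pos[OF C'(1), of "\<nu>0 + \<eta>"] \<nu>0 \<eta>
    by (intro ennreal_lessI mult_strict_right_mono mult_pos_pos) auto
  also have "\<dots> \<le> wL1 \<nu> f"
    by (rule test(5))
  finally show ?thesis
    using test(1,2) by (auto simp: not_le)
qed

theorem theorem5:
  fixes \<nu> :: "real \<Rightarrow> real"
  assumes cont: "continuous_on {0..1} \<nu>"
    and pos: "\<And>x. x \<in> {0..1} \<Longrightarrow> \<nu> x > 0"
  shows "(\<forall>f f'. f 0 = 0 \<and> deriv_on_unit f f' \<longrightarrow>
            wL1 \<nu> f \<le> ennreal (hardy_const \<nu>) * wL1 \<nu> f')
       \<and> (\<forall>C < hardy_const \<nu>. \<exists>f f'. f 0 = 0 \<and> deriv_on_unit f f' \<and>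
            \<not> (wL1 \<nu> f \<le> ennreal C * wL1 \<nu> f'))"
  using weighted_hardy_inequality[OF cont pos] hardy_const_sharp[OF cont pos] by blast

end
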